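(* Let $k$ be a difference field of characteristic $0$, $R=k\{y_1,\ldots,y_n\}$, and $I$ a radical well-mixed $\sigma$-ideal of $R$. Suppose $\mathbf{u}_1,\mathbf{u}_2\in\mathbb{N}[x]^n$ satisfy $\mathbf{y}^{\mathbf{u}_1+\mathbf{u}_2}\in I$. Then $I=\langle I,\mathbf{y}^{\mathbf{u}_1}\rangle_r\cap\langle I,\mathbf{y}^{\mathbf{u}_2}\rangle_r$.
   Context: A difference field is a field $k$ with a ring endomorphism $\sigma$; $R=k\{y_1,\ldots,y_n\}$ is the polynomial ring over $k$ in the variables $\sigma^j(y_i)$, with $\sigma$ extended naturally. For $p=\sum_ic_ix^i\in\mathbb{N}[x]$ and $a\in R$, $a^p=\prod_i(\sigma^i(a))^{c_i}$; $\mathbf{y}^{\mathbf{u}}=y_1^{u_1}\cdots y_n^{u_n}$. A $\sigma$-ideal is an ideal stable under $\sigma$; well-mixed if $ab\in I\Rightarrow a\sigma(b)\in I$. $\langle F\rangle_r$ is the smallest radical well-mixed $\sigma$-ideal containing $F$; $\langle I,f\rangle_r$ means $\langle I\cup\{f\}\rangle_r$. *)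

theory Defs
  imports "HOL-Library.Poly_Mapping" "HOL-Computational_Algebra.Polynomial"
begin

definition ring_endo :: "('k::field \<Rightarrow> 'k) \<Rightarrow> bool" where
  "ring_endo s \<longleftrightarrow> (\<forall>a b. s (a + b) = s a + s b) \<and> (\<forall>a b. s (a * b) = s a * s b) \<and> s 1 = 1"

text \<open>Variables sigma^j(y_i) are indexed by (i, j) with i in the finite type 'n.
  Monomials are finitely supported exponent maps; the difference polynomial ring
  R = k{y_1..y_n} is the ring of finitely supported maps from monomials to k.\<close>
type_synonym 'n dmono = "('n \<times> nat) \<Rightarrow>\<^sub>0 nat"
type_synonym ('n, 'k) dpoly = "'n dmono \<Rightarrow>\<^sub>0 'k"

definition shift_mono :: "'n dmono \<Rightarrow> 'n dmono" where
  "shift_mono m = (\<Sum>v\<in>Poly_Mapping.keys m. Poly_Mapping.single (fst v, Suc (snd v)) (Poly_Mapping.lookup m v))"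

text \<open>Natural extension of sigma to R: acts on coefficients and sends sigma^j(y_i) to sigma^(j+1)(y_i).\<close>
definition sigmaR :: "('k::field \<Rightarrow> 'k) \<Rightarrow> ('n, 'k) dpoly \<Rightarrow> ('n, 'k) dpoly" where
  "sigmaR s p = (\<Sum>m\<in>Poly_Mapping.keys p. Poly_Mapping.single (shift_mono m) (s (Poly_Mapping.lookup p m)))"

definition yvar :: "'n \<Rightarrow> ('n, 'k::field) dpoly" where
  "yvar i = Poly_Mapping.single (Poly_Mapping.single (i, 0) 1) 1"

definition dpow :: "('k::field \<Rightarrow> 'k) \<Rightarrow> ('n, 'k) dpoly \<Rightarrow> nat poly \<Rightarrow> ('n, 'k) dpoly" where
  "dpow s a p = (\<Prod>i\<le>degree p. ((sigmaR s ^^ i) a) ^ coeff p i)"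

definition ymon :: "('k::field \<Rightarrow> 'k) \<Rightarrow> ('n::finite \<Rightarrow> nat poly) \<Rightarrow> ('n, 'k) dpoly" where
  "ymon s u = (\<Prod>i\<in>UNIV. dpow s (yvar i) (u i))"

definition is_ideal :: "('a::comm_ring_1) set \<Rightarrow> bool" where
  "is_ideal I \<longleftrightarrow> 0 \<in> I \<and> (\<forall>a\<in>I. \<forall>b\<in>I. a + b \<in> I) \<and> (\<forall>r. \<forall>a\<in>I. r * a \<in> I)"

definition sigma_ideal :: "('k::field \<Rightarrow> 'k) \<Rightarrow> ('n, 'k) dpoly set \<Rightarrow> bool" where
  "sigma_ideal s I \<longleftrightarrow> is_ideal I \<and> (\<forall>a\<in>I. sigmaR s a \<in> I)"

definition well_mixed :: "('k::field \<Rightarrow> 'k) \<Rightarrow> ('n, 'k) dpoly set \<Rightarrow> bool" where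
  "well_mixed s I \<longleftrightarrow> (\<forall>a b. a * b \<in> I \<longrightarrow> a * sigmaR s b \<in> I)"

definition radical :: "('a::comm_ring_1) set \<Rightarrow> bool" where
  "radical I \<longleftrightarrow> (\<forall>a m. a ^ m \<in> I \<longrightarrow> a \<in> I)"

definition rwm_sigma_ideal :: "('k::field \<Rightarrow> 'k) \<Rightarrow> ('n, 'k) dpoly set \<Rightarrow> bool" where
  "rwm_sigma_ideal s I \<longleftrightarrow> sigma_ideal s I \<and> well_mixed s I \<and> radical I"

definition rwm_closure :: "('k::field \<Rightarrow> 'k) \<Rightarrow> ('n, 'k) dpoly set \<Rightarrow> ('n, 'k) dpoly set" where
  "rwm_closure s F = \<Inter>{J. rwm_sigma_ideal s J \<and> F \<subseteq> J}"

end

theory Submission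
  imports Defs
begin

text \<open>If \<open>a b \<in> I\<close> and \<open>f\<close> lies in both \<open>\<langle>I, a\<rangle>\<^sub>r\<close> and \<open>\<langle>I, b\<rangle>\<^sub>r\<close>, then
  since the colon ideal \<open>I : g\<close> of a radical well-mixed \<open>\<sigma>\<close>-ideal is again one,
  \<open>\<langle>I, a\<rangle>\<^sub>r \<subseteq> I : b\<close> gives \<open>f b \<in> I\<close>, then \<open>\<langle>I, b\<rangle>\<^sub>r \<subseteq> I : f\<close> gives
  \<open>f\<^sup>2 \<in> I\<close>, and radicality gives \<open>f \<in> I\<close>. The monomial
  \<open>y\<^bsup>u\<^sub>1+u\<^sub>2\<^esup>\<close> is the product \<open>y\<^bsup>u\<^sub>1\<^esup> y\<^bsup>u\<^sub>2\<^esup>\<close>.\<close>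

lemma dpow_add: "dpow s x (p + q) = dpow s x p * dpow s x q"
proof -
  let ?N = "max (degree p) (degree q)"
  have extend: "dpow s x r = (\<Prod>i\<le>?N. ((sigmaR s ^^ i) x) ^ coeff r i)"
    if "degree r \<le> ?N" for r
    unfolding dpow_def using that
    by (intro prod.mono_neutral_left) (auto simp: coeff_eq_0)
  have "dpow s x (p + q) = (\<Prod>i\<le>?N. ((sigmaR s ^^ i) x) ^ coeff (p + q) i)"
    by (rule extend) (simp add: degree_add_le)
  also have "\<dots> = (\<Prod>i\<le>?N. ((sigmaR s ^^ i) x) ^ coeff p i * ((sigmaR s ^^ i) x) ^ coeff q i)"
    by (simp add: power_add)
  also have "\<dots> = dpow s x p * dpow s x q"
    by (simp add: prod.distrib extend[of p] extend[of q])
  finally show ?thesis .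
qed

lemma ymon_add: "ymon s (\<lambda>i. u1 i + u2 i) = ymon s u1 * ymon s u2"
  unfolding ymon_def by (simp add: dpow_add prod.distrib)

lemma is_ideal_colon:
  assumes "is_ideal I"
  shows "is_ideal {f. f * g \<in> I}"
  using assms unfolding is_ideal_def by (auto simp: distrib_right mult.assoc)

lemma well_mixed_colon:
  assumes "well_mixed s I"
  shows "well_mixed s {f. f * g \<in> I}"
  unfolding well_mixed_def
proof (intro allI impI)
  fix a b assume "a * b \<in> {f. f * g \<in> I}"
  then have "(a * g) * b \<in> I" by (simp add: ac_simps)
  then have "(a * g) * sigmaR s b \<in> I" using assms unfolding well_mixed_def by blast
  then show "a * sigmaR s b \<in> {f. f * g \<in> I}" by (simp add: ac_simps)
qed

lemma sigma_stable_colon: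
  assumes "well_mixed s I"
  shows "\<forall>a\<in>{f. f * g \<in> I}. sigmaR s a \<in> {f. f * g \<in> I}"
proof
  fix a assume "a \<in> {f. f * g \<in> I}"
  then have "g * sigmaR s a \<in> I"
    using assms unfolding well_mixed_def by (simp add: mult.commute)
  then show "sigmaR s a \<in> {f. f * g \<in> I}" by (simp add: mult.commute)
qed

lemma radical_colon:
  assumes "is_ideal I" "radical I"
  shows "radical {f :: 'a::comm_ring_1. f * g \<in> I}"
  unfolding radical_def
proof (intro allI impI)
  fix a m assume am: "a ^ m \<in> {f. f * g \<in> I}"
  have "(a * g) ^ Suc m = (a * g ^ m) * (a ^ m * g)"
    by (simp add: power_mult_distrib ac_simps)
  then have "(a * g) ^ Suc m \<in> I"
    using am \<open>is_ideal I\<close> unfolding is_ideal_def by simp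
  then show "a \<in> {f. f * g \<in> I}"
    using \<open>radical I\<close> unfolding radical_def by blast
qed

lemma rwm_sigma_ideal_colon:
  assumes "rwm_sigma_ideal s I"
  shows "rwm_sigma_ideal s {f. f * g \<in> I}"
  using assms is_ideal_colon well_mixed_colon sigma_stable_colon radical_colon
  unfolding rwm_sigma_ideal_def sigma_ideal_def by blast

lemma rwm_closure_least:
  assumes "rwm_sigma_ideal s J" "F \<subseteq> J"
  shows "rwm_closure s F \<subseteq> J"
  using assms unfolding rwm_closure_def by blast

lemma subset_rwm_closure: "F \<subseteq> rwm_closure s F"
  unfolding rwm_closure_def by blast

lemma rwm_closure_insert_subset_colon:
  assumes "rwm_sigma_ideal s I" "a * g \<in> I"
  shows "rwm_closure s (insert a I) \<subseteq> {f. f * g \<in> I}"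
proof (rule rwm_closure_least[OF rwm_sigma_ideal_colon[OF assms(1)]])
  have "x * g \<in> I" if "x \<in> I" for x
    using assms(1) that unfolding rwm_sigma_ideal_def sigma_ideal_def is_ideal_def
    by (metis mult.commute)
  then show "insert a I \<subseteq> {f. f * g \<in> I}" using assms(2) by blast
qed

lemma rwm_sigma_ideal_eq_inter_closures:
  assumes I: "rwm_sigma_ideal s I" and ab: "a * b \<in> I"
  shows "I = rwm_closure s (insert a I) \<inter> rwm_closure s (insert b I)"
proof
  show "I \<subseteq> rwm_closure s (insert a I) \<inter> rwm_closure s (insert b I)"
    using subset_rwm_closure by blast
next
  show "rwm_closure s (insert a I) \<inter> rwm_closure s (insert b I) \<subseteq> I"
  proof
    fix f assume f: "f \<in> rwm_closure s (insert a I) \<inter> rwm_closure s (insert b I)"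
    then have "f * b \<in> I"
      using rwm_closure_insert_subset_colon[OF I ab] by blast
    then have "b * f \<in> I" by (simp add: mult.commute)
    then have "f * f \<in> I"
      using f rwm_closure_insert_subset_colon[OF I] by blast
    then have "f ^ 2 \<in> I" by (simp add: power2_eq_square)
    then show "f \<in> I" using I unfolding rwm_sigma_ideal_def radical_def by blast
  qed
qed

theorem lemma5p3:
  fixes s :: "'k::field_char_0 \<Rightarrow> 'k"
    and I :: "('n::finite, 'k) dpoly set"
    and u1 u2 :: "'n \<Rightarrow> nat poly"
  assumes "ring_endo s"
    and "rwm_sigma_ideal s I"
    and "ymon s (\<lambda>i. u1 i + u2 i) \<in> I"
  shows "I = rwm_closure s (insert (ymon s u1) I) \<inter> rwm_closure s (insert (ymon s u2) I)"
  using assms(2,3) by (simp add: ymon_add rwm_sigma_ideal_eq_inter_closures)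

end
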